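(* Let $s\ge 1$ be an integer and let $T$ be a tree with maximum degree $\Delta(T)\ge 2$. Then $$br_{\Delta}(T;s)\le 2s(\Delta(T)-1).$$
   Context: For graphs $H$ and $G$ and a positive integer $s$, write $H\xrightarrow{s} G$ if every coloring of the edges of $H$ with $s$ colors contains a monochromatic subgraph isomorphic to $G$. The degree bipartite Ramsey number is $br_{\Delta}(G;s)=\min\{\Delta(H): H \text{ is bipartite and } H\xrightarrow{s} G\}$, where $\Delta(H)$ denotes the maximum degree of $H$. *)

theory Defs
  imports Main "HOL-Library.Extended_Nat"
begin

definition graph :: "'a set \<Rightarrow> 'a set set \<Rightarrow> bool" where
  "graph V E \<longleftrightarrow> finite V \<and> (\<forall>e\<in>E. e \<subseteq> V \<and> card e = 2)"

definition degree :: "'a set set \<Rightarrow> 'a \<Rightarrow> nat" where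
  "degree E v = card {e\<in>E. v \<in> e}"

definition maxdeg :: "'a set \<Rightarrow> 'a set set \<Rightarrow> nat" where
  "maxdeg V E = Max (insert 0 (degree E ` V))"

definition adj :: "'a set set \<Rightarrow> 'a \<Rightarrow> 'a \<Rightarrow> bool" where
  "adj E u v \<longleftrightarrow> {u, v} \<in> E"

definition is_path :: "'a set \<Rightarrow> 'a set set \<Rightarrow> 'a list \<Rightarrow> bool" where
  "is_path V E xs \<longleftrightarrow> xs \<noteq> [] \<and> distinct xs \<and> set xs \<subseteq> V \<and>
     (\<forall>i. Suc i < length xs \<longrightarrow> adj E (xs ! i) (xs ! Suc i))"

definition connected_graph :: "'a set \<Rightarrow> 'a set set \<Rightarrow> bool" where
  "connected_graph V E \<longleftrightarrow>
     (\<forall>u\<in>V. \<forall>v\<in>V. \<exists>xs. is_path V E xs \<and> hd xs = u \<and> last xs = v)"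

definition is_cycle :: "'a set \<Rightarrow> 'a set set \<Rightarrow> 'a list \<Rightarrow> bool" where
  "is_cycle V E xs \<longleftrightarrow> is_path V E xs \<and> length xs \<ge> 3 \<and> adj E (last xs) (hd xs)"

definition tree :: "'a set \<Rightarrow> 'a set set \<Rightarrow> bool" where
  "tree V E \<longleftrightarrow> graph V E \<and> V \<noteq> {} \<and> connected_graph V E \<and> (\<nexists>xs. is_cycle V E xs)"

definition bipartite :: "'a set \<Rightarrow> 'a set set \<Rightarrow> bool" where
  "bipartite V E \<longleftrightarrow> (\<exists>A\<subseteq>V. \<forall>e\<in>E. card (e \<inter> A) = 1)"

definition mono_copy ::
  "'b set \<Rightarrow> 'b set set \<Rightarrow> ('b set \<Rightarrow> nat) \<Rightarrow> 'a set \<Rightarrow> 'a set set \<Rightarrow> bool" where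
  "mono_copy VH EH c VG EG \<longleftrightarrow>
     (\<exists>f k. inj_on f VG \<and> f ` VG \<subseteq> VH \<and>
        (\<forall>e\<in>EG. f ` e \<in> EH \<and> c (f ` e) = k))"

definition arrows ::
  "'b set \<Rightarrow> 'b set set \<Rightarrow> nat \<Rightarrow> 'a set \<Rightarrow> 'a set set \<Rightarrow> bool" where
  "arrows VH EH s VG EG \<longleftrightarrow>
     (\<forall>c. (\<forall>e\<in>EH. c e < s) \<longrightarrow> mono_copy VH EH c VG EG)"

text \<open>Degree bipartite Ramsey number; host graphs are finite graphs on natural-number
  vertices (no loss of generality). Value \<infinity> if no such host exists.\<close>
definition br_Delta :: "'a set \<Rightarrow> 'a set set \<Rightarrow> nat \<Rightarrow> enat" where
  "br_Delta VG EG s = Inf {enat (maxdeg VH EH) | (VH :: nat set) EH.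
     graph VH EH \<and> bipartite VH EH \<and> arrows VH EH s VG EG}"

end

theory Submission
  imports Defs
begin

text \<open>Take a host graph \<open>H\<close> that is \<open>2s(\<Delta>-1)\<close>-regular, bipartite and has no cycle of
  length at most \<open>|T|\<close>; such graphs arise from \<open>K\<^sub>D\<^sub>,\<^sub>D\<close> by iterated
  \<open>\<int>\<^sub>2\<^sup>E\<close>-lifts, each of which raises the girth. In an \<open>s\<close>-colouring of \<open>H\<close> some colour class
  has at least \<open>(\<Delta>-1)|V(H)|\<close> edges, so deleting vertices of degree below \<open>\<Delta>\<close> leaves a
  nonempty subgraph of minimum degree at least \<open>\<Delta>\<close>. There \<open>T\<close> embeds greedily, one
  vertex at a time: the image of the attaching vertex has at least \<open>\<Delta>\<close> neighbours, and apart
  from images of its tree neighbours none of them is used yet, since that would close a cycle of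
  length at most \<open>|T|\<close> in \<open>H\<close>.\<close>

section \<open>Paths, cycles and degrees\<close>

lemma adj_commute: "adj E u v \<longleftrightarrow> adj E v u"
  by (simp add: adj_def insert_commute)

lemma graph_edge_distinct: "graph V E \<Longrightarrow> {a, b} \<in> E \<Longrightarrow> a \<noteq> b"
  unfolding graph_def by fastforce

lemma graph_edge_in_vertices: "graph V E \<Longrightarrow> {a, b} \<in> E \<Longrightarrow> a \<in> V \<and> b \<in> V"
  unfolding graph_def by blast

lemma graph_finite_edges: "graph V E \<Longrightarrow> finite E"
  unfolding graph_def by (meson Pow_iff finite_Pow_iff finite_subset subsetI)

lemma card_neighbours_eq_degree:
  assumes "\<forall>e\<in>E. card e = 2"
  shows "card {y. {x, y} \<in> E} = degree E x"
  unfolding degree_def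
proof (rule bij_betw_same_card[of "\<lambda>y. {x, y}"], rule bij_betwI')
  fix e assume e: "e \<in> {e \<in> E. x \<in> e}"
  then obtain a b where "e = {a, b}" "a \<noteq> b" using assms by (auto simp: card_2_iff)
  with e show "\<exists>y\<in>{y. {x, y} \<in> E}. e = {x, y}" by (auto simp: insert_commute)
qed (auto simp: doubleton_eq_iff)

lemma sum_degree_eq_twice_card_edges:
  assumes "graph V E"
  shows "(\<Sum>v\<in>V. degree E v) = 2 * card E"
proof -
  have V: "finite V" and E: "finite E" and edge: "\<And>e. e \<in> E \<Longrightarrow> e \<subseteq> V \<and> card e = 2"
    using assms graph_finite_edges unfolding graph_def by auto
  have "(\<Sum>v\<in>V. degree E v) = (\<Sum>v\<in>V. \<Sum>e\<in>E. if v \<in> e then 1 else 0)"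
    unfolding degree_def using E by (simp add: sum.If_cases Int_def)
  also have "\<dots> = (\<Sum>e\<in>E. \<Sum>v\<in>V. if v \<in> e then 1 else 0)"
    by (rule sum.swap)
  also have "\<dots> = (\<Sum>e\<in>E. card e)"
    using V by (intro sum.cong) (auto simp: sum.If_cases Int_absorb1 Int_absorb2 dest: edge)
  also have "\<dots> = 2 * card E"
    using edge by simp
  finally show ?thesis .
qed

lemma is_path_Cons:
  "is_path V E (x # ys) \<longleftrightarrow>
     x \<in> V \<and> x \<notin> set ys \<and> (ys = [] \<or> is_path V E ys \<and> adj E x (hd ys))"
  by (auto simp: is_path_def hd_conv_nth nth_Cons split: nat.splits)

lemma is_path_rev: "is_path V E xs \<Longrightarrow> is_path V E (rev xs)"
  unfolding is_path_def
proof (intro conjI allI impI; (elim conjE)?)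
  fix i assume "\<forall>i. Suc i < length xs \<longrightarrow> adj E (xs ! i) (xs ! Suc i)"
    and i: "Suc i < length (rev xs)"
  then have "adj E (xs ! (length xs - Suc (Suc i))) (xs ! Suc (length xs - Suc (Suc i)))"
    by simp
  then show "adj E (rev xs ! i) (rev xs ! Suc i)"
    using i by (simp add: rev_nth Suc_diff_Suc adj_commute)
qed auto

lemma is_path_map:
  assumes "is_path V E xs" "inj_on f (set xs)" "f ` set xs \<subseteq> V'"
    and "\<And>x y. x \<in> set xs \<Longrightarrow> y \<in> set xs \<Longrightarrow> adj E x y \<Longrightarrow> adj E' (f x) (f y)"
  shows "is_path V' E' (map f xs)"
  using assms by (auto simp: is_path_def distinct_map)

lemma is_cycle_map:
  assumes "is_cycle V E xs" "inj_on f (set xs)" "f ` set xs \<subseteq> V'"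
    and "\<And>x y. x \<in> set xs \<Longrightarrow> y \<in> set xs \<Longrightarrow> adj E x y \<Longrightarrow> adj E' (f x) (f y)"
  shows "is_cycle V' E' (map f xs)"
  using assms is_path_map[of V E xs f V' E'] unfolding is_cycle_def is_path_def
  by (auto simp: last_map hd_map)

section \<open>Regular bipartite graphs of large girth\<close>

definition regular :: "'a set \<Rightarrow> 'a set set \<Rightarrow> nat \<Rightarrow> bool" where
  "regular V E D \<longleftrightarrow> (\<forall>v\<in>V. degree E v = D)"

definition girth_at_least :: "'a set \<Rightarrow> 'a set set \<Rightarrow> nat \<Rightarrow> bool" where
  "girth_at_least V E g \<longleftrightarrow> (\<forall>xs. is_cycle V E xs \<longrightarrow> g \<le> length xs)"

definition regular_bipartite_girth :: "'a set \<Rightarrow> 'a set set \<Rightarrow> nat \<Rightarrow> nat \<Rightarrow> bool" where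
  "regular_bipartite_girth V E D g \<longleftrightarrow>
     graph V E \<and> bipartite V E \<and> V \<noteq> {} \<and> regular V E D \<and> girth_at_least V E g"

lemma girth_at_least_pullback:
  assumes "girth_at_least V E g" "inj_on h V'" "h ` V' \<subseteq> V"
    and "\<And>x y. x \<in> V' \<Longrightarrow> y \<in> V' \<Longrightarrow> adj E' x y \<Longrightarrow> adj E (h x) (h y)"
  shows "girth_at_least V' E' g"
  unfolding girth_at_least_def
proof (intro allI impI)
  fix xs assume xs: "is_cycle V' E' xs"
  then have "set xs \<subseteq> V'"
    by (simp add: is_cycle_def is_path_def)
  with assms(2-4) have "is_cycle V E (map h xs)"
    by (intro is_cycle_map[OF xs] inj_on_subset[OF assms(2)]) blast+
  with assms(1) show "g \<le> length xs"
    unfolding girth_at_least_def by fastforce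
qed

lemma girth_at_least_subgraph:
  "girth_at_least V E g \<Longrightarrow> W \<subseteq> V \<Longrightarrow> F \<subseteq> E \<Longrightarrow> girth_at_least W F g"
  by (erule girth_at_least_pullback[where h = id]) (auto simp: adj_def)

lemma graph_image: "inj_on h V \<Longrightarrow> graph V E \<Longrightarrow> graph (h ` V) ((`) h ` E)"
  unfolding graph_def by (auto simp: card_image inj_on_subset)

lemma bipartite_image:
  assumes "inj_on h V" "graph V E" "bipartite V E"
  shows "bipartite (h ` V) ((`) h ` E)"
proof -
  obtain A where A: "A \<subseteq> V" "\<forall>e\<in>E. card (e \<inter> A) = 1"
    using assms(3) unfolding bipartite_def by blast
  have "card (h ` e \<inter> h ` A) = 1" if "e \<in> E" for e
  proof -
    have "e \<subseteq> V"
      using assms(2) that unfolding graph_def by blast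
    then have "h ` e \<inter> h ` A = h ` (e \<inter> A)" "inj_on h (e \<inter> A)"
      using assms(1) A(1) inj_on_image_Int[OF assms(1)] by (simp, meson inf.coboundedI1 inj_on_subset)
    with A(2) that show ?thesis
      by (simp add: card_image)
  qed
  with A(1) show ?thesis
    unfolding bipartite_def by (intro exI[of _ "h ` A"]) auto
qed

lemma degree_image:
  assumes "inj_on h V" "graph V E" "v \<in> V"
  shows "degree ((`) h ` E) (h v) = degree E v"
proof -
  have sub: "\<And>e. e \<in> E \<Longrightarrow> e \<subseteq> V"
    using assms(2) unfolding graph_def by blast
  have "{x \<in> (`) h ` E. h v \<in> x} = (`) h ` {e \<in> E. v \<in> e}"
    using inj_on_image_mem_iff[OF assms(1,3)] sub by blast
  moreover have "inj_on ((`) h) {e \<in> E. v \<in> e}"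
    using inj_on_image_eq_iff[OF assms(1)] sub unfolding inj_on_def by blast
  ultimately show ?thesis
    unfolding degree_def by (simp add: card_image)
qed

lemma girth_at_least_image:
  assumes "inj_on h V" "graph V E" "girth_at_least V E g"
  shows "girth_at_least (h ` V) ((`) h ` E) g"
proof (rule girth_at_least_pullback[OF assms(3)])
  let ?k = "the_inv_into V h"
  show "inj_on ?k (h ` V)" "?k ` h ` V \<subseteq> V"
    using assms(1) by (auto simp: inj_on_the_inv_into the_inv_into_f_f)
  fix x y assume "adj ((`) h ` E) x y"
  then obtain e where e: "e \<in> E" "{x, y} = h ` e"
    unfolding adj_def by blast
  have "\<forall>z\<in>e. z \<in> V"
    using assms(2) e(1) unfolding graph_def by blast
  then have "?k ` {x, y} = e"
    unfolding e(2) image_image using assms(1) by (simp add: the_inv_into_f_f cong: image_cong)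
  with e(1) show "adj E (?k x) (?k y)"
    unfolding adj_def by simp
qed

lemma regular_bipartite_girth_nat:
  fixes V :: "'a set"
  assumes "regular_bipartite_girth V E D g"
  shows "\<exists>(V' :: nat set) E'. regular_bipartite_girth V' E' D g"
proof -
  have G: "graph V E" and B: "bipartite V E" and R: "regular V E D"
    and "V \<noteq> {}" and girth: "girth_at_least V E g"
    using assms unfolding regular_bipartite_girth_def by simp_all
  have "finite V"
    using G unfolding graph_def by simp
  then obtain h :: "'a \<Rightarrow> nat" where h: "inj_on h V"
    by (metis finite_imp_inj_to_nat_seg)
  have "regular (h ` V) ((`) h ` E) D"
    using R degree_image[OF h G] unfolding regular_def by simp
  with graph_image[OF h G] bipartite_image[OF h G B] girth_at_least_image[OF h G girth]
  have "regular_bipartite_girth (h ` V) ((`) h ` E) D g"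
    using \<open>V \<noteq> {}\<close> unfolding regular_bipartite_girth_def by simp
  then show ?thesis
    by blast
qed

text \<open>The derived graph of the voltage assignment \<open>e \<mapsto> e\<close> in the group \<open>(Pow E, sym_diff)\<close>.
  Around a closed walk the second coordinate changes by the set of edges used an odd number of
  times, so no cycle of the lift projects onto a cycle of \<open>E\<close>.\<close>

definition parity_lift :: "'a set set \<Rightarrow> ('a \<times> 'a set set) set set" where
  "parity_lift E = {{(u, X), (v, sym_diff X {{u, v}})} | u v X. {u, v} \<in> E \<and> X \<subseteq> E}"

lemma parity_lift_iff:
  "{(a, Y), (b, Z)} \<in> parity_lift E \<longleftrightarrow> {a, b} \<in> E \<and> Y \<subseteq> E \<and> Z = sym_diff Y {{a, b}}"
proof
  assume "{(a, Y), (b, Z)} \<in> parity_lift E"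
  then obtain u v X where uv: "{u, v} \<in> E" "X \<subseteq> E"
    and eq: "{(a, Y), (b, Z)} = {(u, X), (v, sym_diff X {{u, v}})}"
    unfolding parity_lift_def by blast
  from eq consider "a = u" "Y = X" "b = v" "Z = sym_diff X {{u, v}}"
    | "a = v" "Y = sym_diff X {{u, v}}" "b = u" "Z = X"
    by (auto simp: doubleton_eq_iff)
  then show "{a, b} \<in> E \<and> Y \<subseteq> E \<and> Z = sym_diff Y {{a, b}}"
    by cases (use uv in \<open>auto simp: insert_commute\<close>)
qed (auto simp: parity_lift_def)

lemma parity_lift_cases:
  assumes "x \<in> parity_lift E"
  obtains a b Y where "x = {(a, Y), (b, sym_diff Y {{a, b}})}" "{a, b} \<in> E" "Y \<subseteq> E"
  using assms unfolding parity_lift_def by blast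

lemma graph_parity_lift:
  assumes "graph V E"
  shows "graph (V \<times> Pow E) (parity_lift E)"
  unfolding graph_def
proof (intro conjI ballI)
  show "finite (V \<times> Pow E)"
    using assms graph_finite_edges unfolding graph_def by auto
  fix x assume "x \<in> parity_lift E"
  then obtain a b Y where x: "x = {(a, Y), (b, sym_diff Y {{a, b}})}" "{a, b} \<in> E" "Y \<subseteq> E"
    by (rule parity_lift_cases)
  with graph_edge_distinct[OF assms] graph_edge_in_vertices[OF assms]
  show "x \<subseteq> V \<times> Pow E" "card x = 2"
    by auto
qed

lemma bipartite_parity_lift:
  assumes "graph V E" "bipartite V E"
  shows "bipartite (V \<times> Pow E) (parity_lift E)"
proof -
  obtain A where A: "A \<subseteq> V" "\<forall>e\<in>E. card (e \<inter> A) = 1"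
    using assms(2) unfolding bipartite_def by blast
  have "card (x \<inter> A \<times> Pow E) = 1" if "x \<in> parity_lift E" for x
  proof -
    obtain a b Y where x: "x = {(a, Y), (b, sym_diff Y {{a, b}})}" "{a, b} \<in> E" "Y \<subseteq> E"
      using \<open>x \<in> parity_lift E\<close> by (rule parity_lift_cases)
    have "a \<noteq> b" "card ({a, b} \<inter> A) = 1"
      using graph_edge_distinct[OF assms(1) x(2)] A(2) x(2) by auto
    then have "a \<in> A \<longleftrightarrow> b \<notin> A"
      by (cases "a \<in> A"; cases "b \<in> A") auto
    then show ?thesis
      using x by (cases "a \<in> A") (auto simp: Int_insert_left)
  qed
  with A(1) show ?thesis
    unfolding bipartite_def by (intro exI[of _ "A \<times> Pow E"]) auto
qed

lemma degree_parity_lift: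
  assumes "graph V E" "u \<in> V" "X \<subseteq> E"
  shows "degree (parity_lift E) (u, X) = degree E u"
proof -
  have "{z. {(u, X), z} \<in> parity_lift E} = (\<lambda>v. (v, sym_diff X {{u, v}})) ` {v. {u, v} \<in> E}"
    using assms(3) by (auto simp: parity_lift_iff)
  then have "card {z. {(u, X), z} \<in> parity_lift E} = card {v. {u, v} \<in> E}"
    by (simp add: card_image inj_on_def)
  with graph_parity_lift[OF assms(1)] assms(1) show ?thesis
    unfolding graph_def by (simp add: card_neighbours_eq_degree)
qed

text \<open>If \<open>w\<close> were injective, the edge \<open>{w 0, w 1}\<close> would be toggled exactly once.\<close>

lemma sym_diff_closed_walk_not_inj:
  fixes w :: "nat \<Rightarrow> 'a" and Y :: "nat \<Rightarrow> 'a set set"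
  assumes "3 \<le> l" "w l = w 0" "Y l = Y 0"
    and toggle: "\<And>k. k < l \<Longrightarrow> Y (Suc k) = sym_diff (Y k) {{w k, w (Suc k)}}"
  shows "\<not> inj_on w {..<l}"
proof
  assume inj: "inj_on w {..<l}"
  define e where "e = {w 0, w 1}"
  have other: "{w k, w (Suc k)} \<noteq> e" if "0 < k" "k < l" for k
  proof
    assume "{w k, w (Suc k)} = e"
    then have "w k = w 1 \<and> w (Suc k) = w 0"
      using inj_onD[OF inj, of k 0] that by (auto simp: e_def doubleton_eq_iff)
    then have "k = 1" "w 2 = w 0"
      using inj_onD[OF inj, of k 1] that \<open>3 \<le> l\<close> by (auto simp: numeral_2_eq_2)
    then show False
      using inj_onD[OF inj, of 2 0] \<open>3 \<le> l\<close> by simp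
  qed
  have "e \<in> Y k \<longleftrightarrow> e \<notin> Y 0" if "1 \<le> k" "k \<le> l" for k
    using that
  proof (induction k rule: dec_induct)
    case base
    then show ?case
      using toggle[of 0] \<open>3 \<le> l\<close> by (simp add: e_def)
  next
    case (step k)
    then show ?case
      using toggle[of k] other[of k] by auto
  qed
  from this[of l] show False
    using \<open>3 \<le> l\<close> \<open>Y l = Y 0\<close> by auto
qed

lemma walk_segment_is_cycle:
  assumes "graph V E" "\<And>k. k < j \<Longrightarrow> {w k, w (Suc k)} \<in> E"
    and "i + 3 \<le> j" "w j = w i" "inj_on w {i..<j}"
  shows "is_cycle V E (map w [i..<j])"
  unfolding is_cycle_def is_path_def
proof (intro conjI allI impI)
  show "distinct (map w [i..<j])"
    using assms(5) by (simp add: distinct_map)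
  show "set (map w [i..<j]) \<subseteq> V"
    using assms(2,3) graph_edge_in_vertices[OF assms(1)] by fastforce
  show "adj E (last (map w [i..<j])) (hd (map w [i..<j]))"
    using assms(2)[of "j - 1"] assms(3,4) by (simp add: adj_def last_map hd_map)
  fix k assume "Suc k < length (map w [i..<j])"
  then show "adj E (map w [i..<j] ! k) (map w [i..<j] ! Suc k)"
    using assms(2)[of "i + k"] by (simp add: adj_def)
qed (use assms(3) in auto)

lemma parity_lift_cycle_walk:
  assumes cyc: "is_cycle (V \<times> Pow E) (parity_lift E) zs"
  obtains w Y where "\<And>k. k < length zs \<Longrightarrow> zs ! k = (w k, Y k)"
    and "w (length zs) = w 0" "Y (length zs) = Y 0"
    and "\<And>k. k < length zs \<Longrightarrow>
      {w k, w (Suc k)} \<in> E \<and> Y (Suc k) = sym_diff (Y k) {{w k, w (Suc k)}}"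
proof -
  define l where "l = length zs"
  define w where "w k = fst ((zs @ [hd zs]) ! k)" for k
  define Y where "Y k = snd ((zs @ [hd zs]) ! k)" for k
  have "zs \<noteq> []"
    using cyc by (auto simp: is_cycle_def is_path_def)
  have nth: "zs ! k = (w k, Y k)" if "k < l" for k
    using that by (simp add: w_def Y_def l_def nth_append)
  have closed: "w l = w 0" "Y l = Y 0"
    using \<open>zs \<noteq> []\<close> by (simp_all add: w_def Y_def l_def nth_append hd_conv_nth)
  have "{(w k, Y k), (w (Suc k), Y (Suc k))} \<in> parity_lift E" if "k < l" for k
  proof (cases "Suc k < l")
    case True
    then have "adj (parity_lift E) (zs ! k) (zs ! Suc k)"
      using cyc by (simp add: is_cycle_def is_path_def l_def)
    with True show ?thesis
      by (simp add: adj_def nth)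
  next
    case False
    with that have "k = l - 1" "Suc k = l"
      by simp_all
    then have "last zs = (w k, Y k)" "hd zs = (w (Suc k), Y (Suc k))"
      using \<open>zs \<noteq> []\<close> closed nth[of k] nth[of 0]
      by (auto simp: last_conv_nth hd_conv_nth l_def)
    with cyc show ?thesis
      by (simp add: is_cycle_def adj_def)
  qed
  with nth closed show ?thesis
    using that unfolding l_def by (simp add: parity_lift_iff)
qed

lemma girth_at_least_parity_lift:
  assumes G: "graph V E" and girth: "girth_at_least V E g"
  shows "girth_at_least (V \<times> Pow E) (parity_lift E) (Suc g)"
  unfolding girth_at_least_def
proof (intro allI impI)
  fix zs assume cyc: "is_cycle (V \<times> Pow E) (parity_lift E) zs"
  define l where "l = length zs"
  obtain w Y where nth: "\<And>k. k < l \<Longrightarrow> zs ! k = (w k, Y k)"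
    and closed: "w l = w 0" "Y l = Y 0"
    and step: "\<And>k. k < l \<Longrightarrow> {w k, w (Suc k)} \<in> E \<and> Y (Suc k) = sym_diff (Y k) {{w k, w (Suc k)}}"
    using parity_lift_cycle_walk[OF cyc] unfolding l_def by metis
  have "3 \<le> l" "distinct zs"
    using cyc by (auto simp: is_cycle_def is_path_def l_def)
  then have "\<not> inj_on w {..<l}"
    using sym_diff_closed_walk_not_inj[OF _ closed] step by blast
  then obtain j where inj: "inj_on w {..<j}" and "\<not> inj_on w {..<Suc j}"
    using exists_least_lemma[of "\<lambda>j. \<not> inj_on w {..<j}"] by auto
  then obtain i where "i < j" "w j = w i"
    by (auto simp: lessThan_Suc)
  have "j < l"
    using inj \<open>\<not> inj_on w {..<l}\<close> by (meson inj_on_subset lessThan_subset_iff not_le)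
  consider "j = Suc i" | "j = Suc (Suc i)" | "i + 3 \<le> j"
    using \<open>i < j\<close> by linarith
  then show "Suc g \<le> length zs"
  proof cases
    case 1
    then show ?thesis
      using step[of i] \<open>j < l\<close> \<open>w j = w i\<close> graph_edge_distinct[OF G] by force
  next
    case 2
    then have "Y j = Y i"
      using step[of i] step[of "Suc i"] \<open>j < l\<close> \<open>w j = w i\<close> by (auto simp: insert_commute)
    then have "zs ! j = zs ! i"
      using nth[of i] nth[of j] \<open>i < j\<close> \<open>j < l\<close> \<open>w j = w i\<close> by simp
    with \<open>distinct zs\<close> \<open>i < j\<close> \<open>j < l\<close> show ?thesis
      by (simp add: l_def nth_eq_iff_index_eq)
  next
    case 3
    have "is_cycle V E (map w [i..<j])"
      using step \<open>j < l\<close> 3 \<open>w j = w i\<close> inj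
      by (intro walk_segment_is_cycle[OF G]) (auto intro: inj_on_subset)
    with girth have "g \<le> j - i"
      unfolding girth_at_least_def by fastforce
    with \<open>j < l\<close> show ?thesis
      by (simp add: l_def)
  qed
qed

lemma regular_bipartite_girth_parity_lift:
  assumes "regular_bipartite_girth V E D g"
  shows "regular_bipartite_girth (V \<times> Pow E) (parity_lift E) D (Suc g)"
  using assms unfolding regular_bipartite_girth_def regular_def
  by (auto simp: graph_parity_lift bipartite_parity_lift degree_parity_lift
      girth_at_least_parity_lift)

lemma complete_bipartite_regular:
  assumes "1 \<le> D"
  shows "\<exists>(V :: (nat \<times> bool) set) E. regular_bipartite_girth V E D 0"
proof -
  define V :: "(nat \<times> bool) set" where "V = {..<D} \<times> UNIV"
  define E where "E = {{x, y} | x y. x \<in> V \<and> y \<in> V \<and> snd x \<noteq> snd y}"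
  have edge_iff: "{x, y} \<in> E \<longleftrightarrow> x \<in> V \<and> y \<in> V \<and> snd x \<noteq> snd y" for x y
  proof
    assume "{x, y} \<in> E"
    then obtain a b where "{x, y} = {a, b}" "a \<in> V" "b \<in> V" "snd a \<noteq> snd b"
      unfolding E_def by blast
    then show "x \<in> V \<and> y \<in> V \<and> snd x \<noteq> snd y"
      by (auto simp: doubleton_eq_iff)
  qed (unfold E_def, blast)
  have G: "graph V E"
    unfolding graph_def E_def V_def by (auto simp: card_insert_if)
  have "card (e \<inter> {..<D} \<times> {True}) = 1" if "e \<in> E" for e
  proof -
    obtain x y where "e = {x, y}" "x \<in> V" "y \<in> V" "snd x \<noteq> snd y"
      using \<open>e \<in> E\<close> unfolding E_def by blast
    then show ?thesis
      by (cases x; cases y) (auto simp: V_def Int_insert_left)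
  qed
  then have B: "bipartite V E"
    unfolding bipartite_def V_def by (intro exI[of _ "{..<D} \<times> {True}"]) auto
  have "degree E x = D" if "x \<in> V" for x
  proof -
    have "{y. {x, y} \<in> E} = {..<D} \<times> {\<not> snd x}"
      using that by (auto simp: edge_iff V_def)
    with G show ?thesis
      unfolding graph_def by (auto simp: card_neighbours_eq_degree[symmetric])
  qed
  moreover have "V \<noteq> {}"
    using assms unfolding V_def by (simp add: lessThan_empty_iff)
  ultimately show ?thesis
    using G B unfolding regular_bipartite_girth_def regular_def girth_at_least_def by blast
qed

text \<open>The lift changes the vertex type, so each step of the induction returns to vertices of
  type \<open>nat\<close>.\<close>

lemma exists_regular_bipartite_girth:
  assumes "1 \<le> D"
  shows "\<exists>(V :: nat set) E. regular_bipartite_girth V E D g"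
proof (induction g)
  case 0
  then show ?case
    using complete_bipartite_regular[OF assms] regular_bipartite_girth_nat by blast
next
  case (Suc g)
  then show ?case
    using regular_bipartite_girth_parity_lift regular_bipartite_girth_nat by blast
qed

section \<open>Dense colour classes\<close>

lemma degree_le_maxdeg: "finite V \<Longrightarrow> v \<in> V \<Longrightarrow> degree E v \<le> maxdeg V E"
  unfolding maxdeg_def by (simp add: Max_ge_iff)

lemma maxdeg_regular: "V \<noteq> {} \<Longrightarrow> regular V E D \<Longrightarrow> maxdeg V E = D"
  unfolding maxdeg_def regular_def by (simp cong: image_cong add: image_constant_conv)

lemma regular_card_edges: "graph V E \<Longrightarrow> regular V E D \<Longrightarrow> 2 * card E = D * card V"
  using sum_degree_eq_twice_card_edges[of V E] unfolding regular_def by (simp add: mult.commute)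

lemma exists_large_colour_class:
  assumes "finite A" "\<forall>a\<in>A. c a < s" "0 < s"
  shows "\<exists>i<s. card A \<le> s * card {a\<in>A. c a = i}"
proof (rule ccontr)
  assume "\<not> ?thesis"
  then have "(\<Sum>i<s. s * card {a\<in>A. c a = i}) < (\<Sum>i<s. card A)"
    using assms(3) by (intro sum_strict_mono) auto
  moreover have "A = (\<Union>i<s. {a\<in>A. c a = i})"
    using assms(2) by auto
  then have "card A = (\<Sum>i<s. card {a\<in>A. c a = i})"
    using assms(1) by (subst card_UN_disjoint[symmetric]) auto
  ultimately show False
    by (simp add: sum_distrib_left[symmetric])
qed

lemma card_eq_card_avoiding_add_degree:
  "finite F \<Longrightarrow> card F = card {e\<in>F. w \<notin> e} + degree F w"
  unfolding degree_def by (subst card_Un_disjoint[symmetric]) (auto intro: arg_cong[where f = card])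

text \<open>Deleting a vertex of degree below \<open>k\<close> preserves the edge bound, which in turn rules out
  a single remaining vertex.\<close>

lemma exists_min_degree_subgraph:
  assumes "finite W" "\<forall>e\<in>F. e \<subseteq> W \<and> card e = 2" "(k - 1) * (card W - 1) < card F"
  shows "\<exists>W'\<subseteq>W. W' \<noteq> {} \<and> (\<forall>w\<in>W'. k \<le> degree {e\<in>F. e \<subseteq> W'} w)"
  using assms
proof (induction "card W" arbitrary: W F rule: less_induct)
  case less
  have "F \<noteq> {}"
    using less.prems(3) by auto
  show ?case
  proof (cases "\<forall>w\<in>W. k \<le> degree F w")
    case True
    moreover have "{e\<in>F. e \<subseteq> W} = F" "W \<noteq> {}"
      using less.prems(2) \<open>F \<noteq> {}\<close> by auto
    ultimately show ?thesis
      by (intro exI[of _ W]) simp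
  next
    case False
    then obtain w where w: "w \<in> W" "degree F w < k"
      by auto
    define F' where "F' = {e\<in>F. w \<notin> e}"
    have "finite F"
      using less.prems(1,2) by (intro finite_subset[of F "Pow W"]) auto
    then have "card F = card F' + degree F w"
      unfolding F'_def by (rule card_eq_card_avoiding_add_degree)
    moreover obtain e where "e \<in> F"
      using \<open>F \<noteq> {}\<close> by auto
    then have "2 \<le> card W"
      using less.prems(2) card_mono[OF less.prems(1), of e] by auto
    then obtain m where "card W = Suc (Suc m)"
      by (metis add_2_eq_Suc le_Suc_ex)
    then have "(k - 1) * (card W - 1) = (k - 1) * (card (W - {w}) - 1) + (k - 1)"
      using w(1) less.prems(1) by simp
    ultimately have dense: "(k - 1) * (card (W - {w}) - 1) < card F'"
      using less.prems(3) w(2) by linarith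
    have edges: "\<forall>e\<in>F'. e \<subseteq> W - {w} \<and> card e = 2"
      using less.prems(2) unfolding F'_def by auto
    have "card (W - {w}) < card W"
      using w(1) less.prems(1) by (rule card_Diff1_less[rotated])
    then obtain W' where W': "W' \<subseteq> W - {w}" "W' \<noteq> {}"
      "\<forall>u\<in>W'. k \<le> degree {e\<in>F'. e \<subseteq> W'} u"
      using less.hyps[OF _ _ edges dense] less.prems(1) by blast
    moreover have "{e\<in>F'. e \<subseteq> W'} = {e\<in>F. e \<subseteq> W'}"
      using W'(1) unfolding F'_def by auto
    ultimately show ?thesis
      by (intro exI[of _ W']) auto
  qed
qed

section \<open>Greedy embedding of trees\<close>

definition connected_on :: "'a set \<Rightarrow> 'a set set \<Rightarrow> 'a set \<Rightarrow> bool" where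
  "connected_on V E S \<longleftrightarrow>
     (\<forall>a\<in>S. \<forall>b\<in>S. \<exists>xs. is_path V E xs \<and> set xs \<subseteq> S \<and> hd xs = a \<and> last xs = b)"

definition partial_embedding ::
  "'a set \<Rightarrow> 'a set set \<Rightarrow> 'b set \<Rightarrow> 'b set set \<Rightarrow> 'a set \<Rightarrow> ('a \<Rightarrow> 'b) \<Rightarrow> bool" where
  "partial_embedding V E W F S f \<longleftrightarrow>
     S \<subseteq> V \<and> connected_on V E S \<and> inj_on f S \<and> f ` S \<subseteq> W \<and> (\<forall>e\<in>E. e \<subseteq> S \<longrightarrow> f ` e \<in> F)"

lemma is_path_length_ge_2: "is_path V E xs \<Longrightarrow> hd xs \<noteq> last xs \<Longrightarrow> 2 \<le> length xs"
  by (cases xs; cases "tl xs") (auto simp: is_path_def)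

lemma connected_on_singleton: "v \<in> V \<Longrightarrow> connected_on V E {v}"
  unfolding connected_on_def by (auto intro!: exI[of _ "[v]"] simp: is_path_def)

lemma connected_on_insert:
  assumes S: "connected_on V E S" and "p \<in> S" "v \<in> V" "v \<notin> S" "{p, v} \<in> E"
  shows "connected_on V E (insert v S)"
proof -
  have from_v: "\<exists>xs. is_path V E xs \<and> set xs \<subseteq> insert v S \<and> hd xs = v \<and> last xs = b"
    if "b \<in> S" for b
  proof -
    obtain ys where ys: "is_path V E ys" "set ys \<subseteq> S" "hd ys = p" "last ys = b"
      using S \<open>p \<in> S\<close> \<open>b \<in> S\<close> unfolding connected_on_def by blast
    then have "ys \<noteq> []"
      by (simp add: is_path_def)
    with ys assms(3-5) have "is_path V E (v # ys)"
      by (auto simp: is_path_Cons adj_def insert_commute)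
    with ys \<open>ys \<noteq> []\<close> show ?thesis
      by (intro exI[of _ "v # ys"]) auto
  qed
  have to_v: "\<exists>xs. is_path V E xs \<and> set xs \<subseteq> insert v S \<and> hd xs = a \<and> last xs = v"
    if a: "a \<in> S" for a
  proof -
    obtain xs where "is_path V E xs" "set xs \<subseteq> insert v S" "hd xs = v" "last xs = a"
      using from_v[OF a] by blast
    moreover have "xs \<noteq> []"
      using \<open>is_path V E xs\<close> by (simp add: is_path_def)
    ultimately show ?thesis
      by (intro exI[of _ "rev xs"]) (simp add: is_path_rev hd_rev last_rev)
  qed
  have "is_path V E [v]"
    using \<open>v \<in> V\<close> by (simp add: is_path_def)
  then have "\<exists>xs. is_path V E xs \<and> set xs \<subseteq> insert v S \<and> hd xs = a \<and> last xs = b"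
    if "a \<in> insert v S" "b \<in> insert v S" for a b
    using that S from_v[of b] to_v[of a] unfolding connected_on_def
    by (cases "a = v"; cases "b = v") (auto, blast)
  then show ?thesis
    unfolding connected_on_def by blast
qed

lemma exists_boundary_step:
  "xs \<noteq> [] \<Longrightarrow> hd xs \<in> S \<Longrightarrow> last xs \<notin> S \<Longrightarrow>
     \<exists>i. Suc i < length xs \<and> xs ! i \<in> S \<and> xs ! Suc i \<notin> S"
proof (induction xs)
  case (Cons x ys)
  then show ?case
  proof (cases "ys \<noteq> [] \<and> hd ys \<in> S")
    case True
    with Cons obtain i where "Suc i < length ys" "ys ! i \<in> S" "ys ! Suc i \<notin> S"
      by auto
    then show ?thesis
      by (intro exI[of _ "Suc i"]) simp
  next
    case False
    with Cons.prems show ?thesis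
      by (intro exI[of _ 0]) (cases ys, auto)
  qed
qed simp

lemma connected_graph_exists_edge_leaving:
  assumes "connected_graph V E" "a \<in> S" "S \<subseteq> V" "b \<in> V - S"
  shows "\<exists>p\<in>S. \<exists>v\<in>V - S. {p, v} \<in> E"
proof -
  obtain xs where xs: "is_path V E xs" "hd xs = a" "last xs = b"
    using assms unfolding connected_graph_def by blast
  then obtain i where "Suc i < length xs" "xs ! i \<in> S" "xs ! Suc i \<notin> S"
    using exists_boundary_step[of xs S] assms(2,4) by (auto simp: is_path_def)
  with xs(1) show ?thesis
    unfolding is_path_def adj_def by (metis nth_mem subsetD Diff_iff)
qed

lemma acyclic_unique_neighbour:
  assumes "\<nexists>xs. is_cycle V E xs" "connected_on V E S" "v \<in> V" "v \<notin> S"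
    and "p \<in> S" "q \<in> S" "{p, v} \<in> E" "{q, v} \<in> E"
  shows "q = p"
proof (rule ccontr)
  assume "q \<noteq> p"
  obtain ys where ys: "is_path V E ys" "set ys \<subseteq> S" "hd ys = p" "last ys = q"
    using assms(2,5,6) unfolding connected_on_def by blast
  with \<open>q \<noteq> p\<close> have "2 \<le> length ys" "ys \<noteq> []"
    using is_path_length_ge_2 by (fastforce simp: is_path_def)+
  with ys assms(3,4,7) have "is_path V E (v # ys)"
    by (auto simp: is_path_Cons adj_def insert_commute)
  with ys \<open>2 \<le> length ys\<close> \<open>ys \<noteq> []\<close> assms(8) have "is_cycle V E (v # ys)"
    by (simp add: is_cycle_def adj_def)
  with assms(1) show False
    by blast
qed

lemma partial_embedding_reflects_edges:
  assumes "graph W F" "girth_at_least W F (Suc (card V))" "finite V"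
    and emb: "partial_embedding V E W F S f" and "p \<in> S" "z \<in> S" "{f p, f z} \<in> F"
  shows "{p, z} \<in> E"
proof (rule ccontr)
  assume "{p, z} \<notin> E"
  have "p \<noteq> z"
    using graph_edge_distinct[OF assms(1,7)] by auto
  have "connected_on V E S" and edges: "\<And>e. e \<in> E \<Longrightarrow> e \<subseteq> S \<Longrightarrow> f ` e \<in> F"
    using emb by (simp_all add: partial_embedding_def)
  then obtain ys where ys: "is_path V E ys" "set ys \<subseteq> S" "hd ys = p" "last ys = z"
    using \<open>p \<in> S\<close> \<open>z \<in> S\<close> unfolding connected_on_def by blast
  have "3 \<le> length ys"
  proof (rule ccontr)
    assume "\<not> 3 \<le> length ys"
    with is_path_length_ge_2[OF ys(1)] ys(3,4) \<open>p \<noteq> z\<close> have "length ys = 2"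
      by simp
    with ys(3,4) have "ys = [p, z]"
      by (cases ys; cases "tl ys") auto
    with ys(1) \<open>{p, z} \<notin> E\<close> show False
      unfolding is_path_def adj_def by (auto dest: spec[of _ 0])
  qed
  have path: "is_path W F (map f ys)"
  proof (rule is_path_map[OF ys(1)])
    show "inj_on f (set ys)" "f ` set ys \<subseteq> W"
      using emb ys(2) inj_on_subset[of f S "set ys"] unfolding partial_embedding_def by auto
    fix x y assume "x \<in> set ys" "y \<in> set ys" "adj E x y"
    with ys(2) have "{x, y} \<in> E" "{x, y} \<subseteq> S"
      by (auto simp: adj_def)
    then show "adj F (f x) (f y)"
      using edges[of "{x, y}"] by (simp add: adj_def)
  qed
  have "ys \<noteq> []"
    using \<open>3 \<le> length ys\<close> by auto
  then have "last (map f ys) = f z" "hd (map f ys) = f p"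
    using ys by (simp_all add: last_map hd_map)
  with path assms(7) \<open>3 \<le> length ys\<close> have "is_cycle W F (map f ys)"
    by (simp add: is_cycle_def adj_def insert_commute)
  with assms(2) have "Suc (card V) \<le> length ys"
    unfolding girth_at_least_def by fastforce
  moreover have "length ys = card (set ys)" "set ys \<subseteq> V"
    using ys emb unfolding partial_embedding_def is_path_def by (auto simp: distinct_card)
  then have "length ys \<le> card V"
    using card_mono[OF assms(3)] by simp
  ultimately show False
    by simp
qed

lemma partial_embedding_free_neighbour:
  assumes "graph V E" "graph W F" "girth_at_least W F (Suc (card V))"
    and emb: "partial_embedding V E W F S f" and "p \<in> S" "v \<notin> S" "{p, v} \<in> E"
    and "degree E p \<le> degree F (f p)"
  shows "\<exists>y. {f p, y} \<in> F \<and> y \<notin> f ` S"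
proof -
  define NE where "NE = {q. {p, q} \<in> E}"
  define NF where "NF = {y. {f p, y} \<in> F}"
  have "NE \<subseteq> V" "NF \<subseteq> W"
    using graph_edge_in_vertices[OF assms(1)] graph_edge_in_vertices[OF assms(2)]
    unfolding NE_def NF_def by blast+
  then have "finite NE" "finite NF"
    using assms(1,2) unfolding graph_def by (auto intro: finite_subset)
  have "NF \<inter> f ` S \<subseteq> f ` (NE - {v})"
  proof
    fix y assume "y \<in> NF \<inter> f ` S"
    then obtain z where z: "z \<in> S" "y = f z" "{f p, f z} \<in> F"
      unfolding NF_def by blast
    then have "{p, z} \<in> E"
      using partial_embedding_reflects_edges[OF assms(2,3) _ emb \<open>p \<in> S\<close>] assms(1)
      unfolding graph_def by blast
    moreover have "z \<noteq> v"
      using z(1) \<open>v \<notin> S\<close> by blast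
    ultimately show "y \<in> f ` (NE - {v})"
      unfolding NE_def using z(2) by blast
  qed
  then have "card (NF \<inter> f ` S) \<le> card (f ` (NE - {v}))"
    using \<open>finite NE\<close> by (intro card_mono) auto
  also have "\<dots> \<le> card (NE - {v})"
    by (rule card_image_le) (use \<open>finite NE\<close> in simp)
  also have "\<dots> < card NE"
    using \<open>finite NE\<close> assms(7) by (intro card_Diff1_less) (auto simp: NE_def)
  also have "\<dots> \<le> card NF"
    using assms(1,2,8) unfolding NE_def NF_def graph_def by (simp add: card_neighbours_eq_degree)
  finally have "\<not> NF \<subseteq> f ` S"
    by (auto simp: Int_absorb2)
  then show ?thesis
    unfolding NF_def by blast
qed

lemma partial_embedding_insert:
  assumes "graph V E" "\<nexists>xs. is_cycle V E xs"
    and emb: "partial_embedding V E W F S f"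
    and "p \<in> S" "v \<in> V" "v \<notin> S" "{p, v} \<in> E" "y \<in> W" "{f p, y} \<in> F" "y \<notin> f ` S"
  shows "partial_embedding V E W F (insert v S) (f(v := y))"
proof -
  have S: "S \<subseteq> V" "connected_on V E S" "inj_on f S" "f ` S \<subseteq> W"
    and edges: "\<And>e. e \<in> E \<Longrightarrow> e \<subseteq> S \<Longrightarrow> f ` e \<in> F"
    using emb by (simp_all add: partial_embedding_def)
  have same: "(f(v := y)) ` e = f ` e" if "e \<subseteq> S" for e
    using that \<open>v \<notin> S\<close> by (auto intro!: image_cong)
  have "(f(v := y)) ` e \<in> F" if "e \<in> E" "e \<subseteq> insert v S" for e
  proof (cases "v \<in> e")
    case False
    with that have "e \<subseteq> S"
      by auto
    with same[of e] edges[OF \<open>e \<in> E\<close>] show ?thesis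
      by simp
  next
    case True
    obtain a b where "e = {a, b}" "a \<noteq> b"
      using assms(1) \<open>e \<in> E\<close> unfolding graph_def by (meson card_2_iff)
    with True obtain q where q: "e = {q, v}" "q \<noteq> v"
      by (auto simp: insert_commute)
    with that have "q \<in> S" "{q, v} \<in> E"
      by auto
    then have "q = p"
      using acyclic_unique_neighbour[OF assms(2) S(2) assms(5,6,4)] assms(7) by blast
    with q \<open>p \<in> S\<close> \<open>v \<notin> S\<close> assms(9) show ?thesis
      by auto
  qed
  moreover have "inj_on (f(v := y)) (insert v S)"
    using S(3) same[of S] \<open>v \<notin> S\<close> \<open>y \<notin> f ` S\<close> by (simp add: inj_on_fun_updI)
  ultimately show ?thesis
    using S assms(4-8) same[of S]
    unfolding partial_embedding_def by (simp add: connected_on_insert)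
qed

lemma partial_embedding_singleton:
  assumes "graph V E" "v \<in> V" "w \<in> W"
  shows "partial_embedding V E W F {v} (\<lambda>_. w)"
proof -
  have "\<not> e \<subseteq> {v}" if "e \<in> E" for e
    using assms(1) that card_mono[of "{v}" e] unfolding graph_def by fastforce
  with assms(2,3) show ?thesis
    unfolding partial_embedding_def by (auto simp: connected_on_singleton)
qed

lemma partial_embedding_extend:
  assumes T: "tree V E" and deg: "\<forall>v\<in>V. degree E v \<le> k"
    and H: "graph W F" "\<forall>w\<in>W. k \<le> degree F w" "girth_at_least W F (Suc (card V))"
    and emb: "partial_embedding V E W F S f" and "S \<noteq> {}" "card S < card V"
  shows "\<exists>v y. v \<in> V - S \<and> partial_embedding V E W F (insert v S) (f(v := y))"
proof -
  have G: "graph V E" and conn: "connected_graph V E" and acyclic: "\<nexists>xs. is_cycle V E xs"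
    using T unfolding tree_def by auto
  have "S \<subseteq> V"
    using emb by (simp add: partial_embedding_def)
  moreover have "\<not> V \<subseteq> S"
    using \<open>card S < card V\<close> card_mono[OF finite_subset[OF \<open>S \<subseteq> V\<close>], of V] G
    unfolding graph_def by auto
  ultimately obtain p v where pv: "p \<in> S" "v \<in> V - S" "{p, v} \<in> E"
    using connected_graph_exists_edge_leaving[OF conn] \<open>S \<noteq> {}\<close> by blast
  have "p \<in> V" "f p \<in> W"
    using pv(1) emb unfolding partial_embedding_def by auto
  then have "degree E p \<le> degree F (f p)"
    using deg H(2) order_trans by blast
  then obtain y where y: "{f p, y} \<in> F" "y \<notin> f ` S"
    using partial_embedding_free_neighbour[OF G H(1,3) emb pv(1) _ pv(3)] pv(2) by blast
  then have "y \<in> W"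
    using graph_edge_in_vertices[OF H(1)] by blast
  with pv y have "partial_embedding V E W F (insert v S) (f(v := y))"
    using partial_embedding_insert[OF G acyclic emb] by blast
  with pv(2) show ?thesis
    by blast
qed

lemma tree_embeds_into_min_degree_graph:
  assumes T: "tree V E" and deg: "\<forall>v\<in>V. degree E v \<le> k"
    and H: "graph W F" "W \<noteq> {}" "\<forall>w\<in>W. k \<le> degree F w" "girth_at_least W F (Suc (card V))"
  shows "\<exists>f. inj_on f V \<and> f ` V \<subseteq> W \<and> (\<forall>e\<in>E. f ` e \<in> F)"
proof -
  have G: "graph V E" and "V \<noteq> {}"
    using T unfolding tree_def by auto
  have "finite V"
    using G unfolding graph_def by simp
  have grow: "\<exists>S f. card S = m \<and> partial_embedding V E W F S f"
    if "1 \<le> m" "m \<le> card V" for m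
    using that
  proof (induction m rule: nat_induct_at_least)
    case base
    obtain v w where "v \<in> V" "w \<in> W"
      using \<open>V \<noteq> {}\<close> H(2) by blast
    with G show ?case
      by (intro exI[of _ "{v}"]) (auto intro: partial_embedding_singleton)
  next
    case (Suc m)
    then obtain S f where S: "card S = m" "partial_embedding V E W F S f"
      by auto
    with Suc.hyps Suc.prems obtain v y
      where "v \<in> V - S" "partial_embedding V E W F (insert v S) (f(v := y))"
      using partial_embedding_extend[OF T deg H(1,3,4)] by fastforce
    moreover have "finite S"
      using S(2) \<open>finite V\<close> unfolding partial_embedding_def by (auto intro: finite_subset)
    ultimately show ?case
      using S(1) by (intro exI) auto
  qed
  obtain S f where "card S = card V" "partial_embedding V E W F S f"
    using grow[of "card V"] \<open>V \<noteq> {}\<close> \<open>finite V\<close> by (auto simp: Suc_le_eq card_gt_0_iff)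
  moreover have "S = V"
    using calculation \<open>finite V\<close> by (simp add: partial_embedding_def card_subset_eq)
  ultimately show ?thesis
    using G unfolding partial_embedding_def graph_def by auto
qed

section \<open>The degree bipartite Ramsey bound\<close>

lemma exists_dense_colour_class:
  assumes "graph V E" "V \<noteq> {}" "regular V E (2 * s * (k - 1))" "2 \<le> k"
    and "\<forall>e\<in>E. c e < s" "1 \<le> s"
  shows "\<exists>i. (k - 1) * (card V - 1) < card {e\<in>E. c e = i}"
proof -
  have "finite V" "finite E"
    using assms(1) graph_finite_edges unfolding graph_def by auto
  then have "1 \<le> card V"
    using assms(2) by (simp add: Suc_le_eq card_gt_0_iff)
  obtain i where "card E \<le> s * card {e\<in>E. c e = i}"
    using exists_large_colour_class[OF \<open>finite E\<close> assms(5)] assms(6) by auto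
  moreover have "2 * card E = 2 * (s * ((k - 1) * card V))"
    using regular_card_edges[OF assms(1,3)] by simp
  ultimately have "(k - 1) * card V \<le> card {e\<in>E. c e = i}"
    using assms(6) by simp
  moreover have "(k - 1) * (card V - 1) < (k - 1) * card V"
    using assms(4) \<open>1 \<le> card V\<close> by simp
  ultimately show ?thesis
    by (intro exI[of _ i]) linarith
qed

lemma regular_girth_arrows_tree:
  assumes T: "tree V E" and deg: "\<forall>v\<in>V. degree E v \<le> k" and "2 \<le> k" "1 \<le> s"
    and H: "regular_bipartite_girth VH EH (2 * s * (k - 1)) (Suc (card V))"
  shows "arrows VH EH s V E"
  unfolding arrows_def
proof (intro allI impI)
  fix c :: "'b set \<Rightarrow> nat" assume c: "\<forall>e\<in>EH. c e < s"
  have G: "graph VH EH" and "VH \<noteq> {}" and R: "regular VH EH (2 * s * (k - 1))"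
    and girth: "girth_at_least VH EH (Suc (card V))"
    using H unfolding regular_bipartite_girth_def by auto
  obtain i where dense: "(k - 1) * (card VH - 1) < card {e\<in>EH. c e = i}"
    using exists_dense_colour_class[OF G \<open>VH \<noteq> {}\<close> R \<open>2 \<le> k\<close> c \<open>1 \<le> s\<close>] by blast
  define Fi where "Fi = {e\<in>EH. c e = i}"
  have "finite VH" and Fi_edges: "\<forall>e\<in>Fi. e \<subseteq> VH \<and> card e = 2"
    using G unfolding graph_def Fi_def by auto
  obtain W where W: "W \<subseteq> VH" "W \<noteq> {}" "\<forall>w\<in>W. k \<le> degree {e\<in>Fi. e \<subseteq> W} w"
    using exists_min_degree_subgraph[OF \<open>finite VH\<close> Fi_edges] dense unfolding Fi_def by blast
  define FW where "FW = {e\<in>Fi. e \<subseteq> W}"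
  have "finite W"
    using finite_subset[OF W(1) \<open>finite VH\<close>] .
  with Fi_edges have "graph W FW"
    unfolding graph_def FW_def by auto
  moreover have "FW \<subseteq> EH"
    unfolding FW_def Fi_def by auto
  then have "girth_at_least W FW (Suc (card V))"
    by (rule girth_at_least_subgraph[OF girth W(1)])
  ultimately obtain f where f: "inj_on f V" "f ` V \<subseteq> W" "\<forall>e\<in>E. f ` e \<in> FW"
    using tree_embeds_into_min_degree_graph[OF T deg _ W(2)] W(3) unfolding FW_def by blast
  then have "f ` V \<subseteq> VH" "\<forall>e\<in>E. f ` e \<in> EH \<and> c (f ` e) = i"
    using W(1) unfolding FW_def Fi_def by auto
  with f(1) show "mono_copy VH EH c V E"
    unfolding mono_copy_def by blast
qed

theorem theorem2:
  fixes V :: "'a set" and E :: "'a set set" and s :: nat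
  assumes "s \<ge> 1" and "tree V E" and "maxdeg V E \<ge> 2"
  shows "br_Delta V E s \<le> enat (2 * s * (maxdeg V E - 1))"
proof -
  define D where "D = 2 * s * (maxdeg V E - 1)"
  have "1 \<le> D"
    using assms(1,3) unfolding D_def by simp
  then obtain VH :: "nat set" and EH where H: "regular_bipartite_girth VH EH D (Suc (card V))"
    using exists_regular_bipartite_girth by blast
  have "finite V"
    using assms(2) unfolding tree_def graph_def by simp
  then have "\<forall>v\<in>V. degree E v \<le> maxdeg V E"
    by (simp add: degree_le_maxdeg)
  then have "arrows VH EH s V E"
    by (rule regular_girth_arrows_tree[OF assms(2) _ assms(3,1) H[unfolded D_def]])
  moreover have "graph VH EH" "bipartite VH EH" "maxdeg VH EH = D"
    using H unfolding regular_bipartite_girth_def by (simp_all add: maxdeg_regular)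
  ultimately have "br_Delta V E s \<le> enat D"
    unfolding br_Delta_def by (intro Inf_lower) auto
  then show ?thesis
    unfolding D_def .
qed

end
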